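(* Let $C_2\subseteq C_1\subseteq\mathbb{F}_2^n$ be linear codes with bases $\beta_2\subseteq\beta_1$, respectively, and $Q=Q(C_1,C_2)$ the corresponding CSS code. If $N=2^\ell$ ($\ell$ a positive integer), then $$H_N=\left(\beta_2\star\bigcup_{i=0}^{\ell-1}\left(2^i\beta_1^{(i)}\right)\right)^{\perp_N}.$$
   Context: Elements of $\mathbb{F}_2^n$ are identified with vectors in $\{0,1\}^n\subseteq\mathbb{Z}_N^n$. $\omega=e^{2\pi\mathbf{i}/N}$, $U(a)=\mathrm{diag}(1,\omega^a)$ for $a\in\mathbb{Z}_N$ and $U(b)=\bigotimes_{i=1}^nU(b_i)$ for $b\in\mathbb{Z}_N^n$. $Q(C_1,C_2)$ is the subspace of $(\mathbb{C}^2)^{\otimes n}$ stabilized by all $X(u)Z(v)$, $u\in C_2$, $v\in C_1^\perp$, where $X(u)=\bigotimes X^{u_i}$, $Z(v)=\bigotimes Z^{v_i}$ with $X,Z$ the Pauli matrices. $H_N=\{b\in\mathbb{Z}_N^n: U(b)Q=Q\}$. For $u,v\in\mathbb{Z}_N^n$, $u\star v$ is the componentwise product. For a set $A$ of vectors and $r\ge1$, $A^{(r)}=\{v_1\star\cdots\star v_r: v_i\in A,\ v_i\neq v_j \text{ for } i\neq j\}$ and $A^{(0)}=\{(1,\ldots,1)\}$; $2^iA=\{2^ia:a\in A\}$; for sets $A,B$, $A\star B=\{a\star b: a\in A, b\in B\}$; and $A^{\perp_N}=\{w\in\mathbb{Z}_N^n: v\cdot w=0 \bmod N\ \forall v\in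 A\}$. *)

theory Defs
  imports "HOL-Analysis.Analysis" "HOL-Library.Z2"
begin

(* F_2^n is  bit ^ 'n ; Z_N^n is represented by  int ^ 'n  with entries in {0..<N}.
   A state in (C^2)^{\<otimes> n} is a function  bit ^ 'n \<Rightarrow> complex  (coefficients
   in the computational basis |x>, x \<in> {0,1}^n). *)

definition embZ :: "bit ^ 'n \<Rightarrow> int ^ 'n" where
  "embZ x = (\<chi> i. of_bit (x $ i))"

definition ZN_vecs :: "nat \<Rightarrow> (int ^ 'n) set" where
  "ZN_vecs N = {b. \<forall>i. 0 \<le> b $ i \<and> b $ i < int N}"

definition dotZ :: "int ^ 'n \<Rightarrow> int ^ 'n \<Rightarrow> int" where
  "dotZ v w = (\<Sum>i\<in>UNIV. v $ i * w $ i)"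

definition dotF2 :: "bit ^ 'n \<Rightarrow> bit ^ 'n \<Rightarrow> bit" where
  "dotF2 v w = (\<Sum>i\<in>UNIV. v $ i * w $ i)"

definition dual_code :: "(bit ^ 'n) set \<Rightarrow> (bit ^ 'n) set" where
  "dual_code C = {v. \<forall>c\<in>C. dotF2 v c = 0}"

definition Xop :: "bit ^ 'n \<Rightarrow> (bit ^ 'n \<Rightarrow> complex) \<Rightarrow> (bit ^ 'n \<Rightarrow> complex)" where
  "Xop u \<psi> = (\<lambda>x. \<psi> (x + u))"

definition Zop :: "bit ^ 'n \<Rightarrow> (bit ^ 'n \<Rightarrow> complex) \<Rightarrow> (bit ^ 'n \<Rightarrow> complex)" where
  "Zop v \<psi> = (\<lambda>x. (if dotF2 v x = 0 then 1 else -1) * \<psi> x)"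

definition CSS :: "(bit ^ 'n) set \<Rightarrow> (bit ^ 'n) set \<Rightarrow> (bit ^ 'n \<Rightarrow> complex) set" where
  "CSS C1 C2 = {\<psi>. \<forall>u\<in>C2. \<forall>v\<in>dual_code C1. Xop u (Zop v \<psi>) = \<psi>}"

definition omega :: "nat \<Rightarrow> complex" where
  "omega N = exp (2 * pi * \<i> / of_nat N)"

(* U(b) = tensor of diag(1, omega^{b_i}):  U(b)|x> = omega^{b.x}|x> *)
definition Uop :: "nat \<Rightarrow> int ^ 'n \<Rightarrow> (bit ^ 'n \<Rightarrow> complex) \<Rightarrow> (bit ^ 'n \<Rightarrow> complex)" where
  "Uop N b \<psi> = (\<lambda>x. omega N powi (dotZ b (embZ x)) * \<psi> x)"

definition H_N :: "nat \<Rightarrow> (bit ^ 'n) set \<Rightarrow> (bit ^ 'n) set \<Rightarrow> (int ^ 'n) set" where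
  "H_N N C1 C2 = {b \<in> ZN_vecs N. Uop N b ` CSS C1 C2 = CSS C1 C2}"

definition starN :: "nat \<Rightarrow> int ^ 'n \<Rightarrow> int ^ 'n \<Rightarrow> int ^ 'n" where
  "starN N u v = (\<chi> i. (u $ i * v $ i) mod int N)"

definition star_set :: "nat \<Rightarrow> (int ^ 'n) set \<Rightarrow> (int ^ 'n) set \<Rightarrow> (int ^ 'n) set" where
  "star_set N A B = {starN N a b | a b. a \<in> A \<and> b \<in> B}"

definition rprod :: "nat \<Rightarrow> (int ^ 'n) set \<Rightarrow> nat \<Rightarrow> (int ^ 'n) set" where
  "rprod N A r = {fold (starN N) vs (\<chi> i. 1) | vs. length vs = r \<and> distinct vs \<and> set vs \<subseteq> A}"

definition scale_set :: "nat \<Rightarrow> int \<Rightarrow> (int ^ 'n) set \<Rightarrow> (int ^ 'n) set" where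
  "scale_set N c A = {(\<chi> i. (c * a $ i) mod int N) | a. a \<in> A}"

definition perpN :: "nat \<Rightarrow> (int ^ 'n) set \<Rightarrow> (int ^ 'n) set" where
  "perpN N A = {w \<in> ZN_vecs N. \<forall>v\<in>A. dotZ v w mod int N = 0}"

end

theory Submission
  imports Defs
begin

(*
  States of Q are supported on C1 and, up to the Z-signs,
  constant on the cosets of C2; hence U(b) preserves Q iff b.(y + c) = b.y (mod N) for all
  y in C1 and c in C2, necessity being tested on the indicator state of a coset y + C2.
  It suffices to take c = g in beta2 and y the sum of a finite S <= beta1. Over the integers
  x xor g = x + g - 2xg and 1 - 2(s_1 xor ... xor s_k) = (1 - 2s_1) ... (1 - 2s_k), so
    b.(y + g) - b.y = sum over T <= S of (-2)^|T| b.(g star t_1 star ... star t_|T|).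
  Induction on |S| shows that all these sums vanish mod N iff every term 2^|S| b.(g star S)
  does. For |S| >= l this is automatic as N = 2^l; for |S| < l it says that b is orthogonal
  to the generator 2^|S| (g star S) of the right-hand side.
*)

section \<open>Diagonal phase operators preserving a CSS code\<close>

lemma dual_code_separates:
  fixes C :: "(bit ^ 'n) set"
  assumes "vec.subspace C" and "z \<notin> C"
  obtains v where "v \<in> dual_code C" and "dotF2 v z = 1"
proof -
  obtain B where B: "B \<subseteq> C" "vec.independent B" "C \<subseteq> vec.span B"
    using vec.maximal_independent_subset by blast
  have span_B: "vec.span B = C"
    using B assms(1) by (simp add: vec.span_subspace)
  have indep: "vec.independent (insert z B)"
    using B(2) assms(2) span_B by (intro vec.independent_insertI) auto
  obtain f where f: "Vector_Spaces.linear (*s) ((*) :: bit \<Rightarrow> _) f"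
      and f_basis: "\<forall>x\<in>insert z B. f x = (if x = z then 1 else 0)"
    using vector_space_pair.linear_independent_extend[OF vector_space_pair.intro, OF
        vec.vector_space_axioms vector_space_over_itself.vector_space_axioms indep,
        of "\<lambda>x. if x = z then 1 else 0"]
    by blast
  interpret f: Vector_Spaces.linear "(*s)" "(*) :: bit \<Rightarrow> _" f by (fact f)
  define v where "v = (\<chi> j. f (axis j 1))"
  have f_dot: "f x = dotF2 v x" for x
  proof -
    have "f x = f (\<Sum>i\<in>UNIV. x $ i *s axis i 1)"
      by (simp add: basis_expansion)
    also have "\<dots> = dotF2 v x"
      by (simp add: f.sum f.scale dotF2_def v_def mult.commute conj_commute)
    finally show ?thesis .
  qed
  have "f c = 0" if "c \<in> C" for c
    using that unfolding span_B[symmetric]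
  proof (induction rule: vec.span_induct_alt)
    case (step a x y)
    then have "x \<noteq> z" using assms(2) B(1) by blast
    then show ?case using step f_basis by (simp add: f.add f.scale)
  qed (simp add: f.zero)
  then have "v \<in> dual_code C"
    by (simp add: dual_code_def f_dot)
  moreover have "dotF2 v z = 1"
    using f_basis by (simp add: f_dot)
  ultimately show thesis by (rule that)
qed

lemma omega_powi_eq_iff:
  assumes "N > 0"
  shows "omega N powi k = omega N powi m \<longleftrightarrow> k mod int N = m mod int N"
proof -
  have "omega N powi j = exp (of_int j * (2 * pi * \<i>) / of_nat N)" for j
    by (simp add: omega_def exp_power_int)
  then have "omega N powi k = omega N powi m \<longleftrightarrow> (\<exists>n::int.
      of_int k * (2 * pi * \<i>) / of_nat N =
      of_int m * (2 * pi * \<i>) / of_nat N + of_int (2 * n) * pi * \<i>)"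
    by (simp add: exp_eq)
  also have "\<dots> \<longleftrightarrow>
      (\<exists>n::int. of_int k * (2 * pi * \<i>) = of_int (m + n * int N) * (2 * pi * \<i>))"
    using assms by (simp add: field_simps)
  also have "\<dots> \<longleftrightarrow> (\<exists>n::int. k = m + n * int N)"
    by (simp only: mult_cancel_right of_int_eq_iff) simp
  also have "\<dots> \<longleftrightarrow> k mod int N = m mod int N"
    by (auto simp: mod_eq_dvd_iff dvd_def algebra_simps)
  finally show ?thesis .
qed

lemma CSS_support:
  assumes "vec.subspace C1" and "vec.subspace C2" and "\<psi> \<in> CSS C1 C2" and "\<psi> z \<noteq> 0"
  shows "z \<in> C1"
proof (rule ccontr)
  assume "z \<notin> C1"
  then obtain v where "v \<in> dual_code C1" and "dotF2 v z = 1"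
    using dual_code_separates assms(1) by blast
  then have "Xop 0 (Zop v \<psi>) z = \<psi> z"
    using assms(2,3) by (simp add: CSS_def vec.subspace_0)
  then have "- \<psi> z = \<psi> z"
    using \<open>dotF2 v z = 1\<close> by (simp add: Xop_def Zop_def)
  then show False
    using assms(4) by (simp add: minus_equation_iff)
qed

definition coset_phase_invariant ::
    "nat \<Rightarrow> (bit ^ 'n) set \<Rightarrow> (bit ^ 'n) set \<Rightarrow> int ^ 'n \<Rightarrow> bool" where
  "coset_phase_invariant N C1 C2 b \<longleftrightarrow>
     (\<forall>y\<in>C1. \<forall>c\<in>C2. dotZ b (embZ (y + c)) mod int N = dotZ b (embZ y) mod int N)"

lemma dotZ_uminus_left: "dotZ (- v) w = - dotZ v w"
  by (simp add: dotZ_def sum_negf)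

lemma coset_phase_invariant_uminus:
  "coset_phase_invariant N C1 C2 b \<Longrightarrow> coset_phase_invariant N C1 C2 (- b)"
  unfolding coset_phase_invariant_def dotZ_uminus_left by (blast intro: mod_minus_cong)

lemma Uop_uminus_cancel: "Uop N b (Uop N (- b) \<psi>) = \<psi>"
  by (simp add: Uop_def dotZ_uminus_left power_int_minus omega_def mult.assoc[symmetric])

lemma Uop_mem_CSS:
  assumes "vec.subspace C1" and "vec.subspace C2" and "N > 0"
    and "coset_phase_invariant N C1 C2 b" and \<psi>: "\<psi> \<in> CSS C1 C2"
  shows "Uop N b \<psi> \<in> CSS C1 C2"
  unfolding CSS_def
proof (intro CollectI ballI ext)
  fix u v z assume u: "u \<in> C2" and v: "v \<in> dual_code C1"
  define s :: complex where "s = (if dotF2 v (z + u) = 0 then 1 else -1)"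
  have "Xop u (Zop v \<psi>) z = \<psi> z"
    using \<psi> u v by (simp add: CSS_def)
  then have \<psi>_shift: "s * \<psi> (z + u) = \<psi> z"
    by (simp add: Xop_def Zop_def s_def)
  have phase: "\<psi> z \<noteq> 0 \<Longrightarrow>
      omega N powi (dotZ b (embZ (z + u))) = omega N powi (dotZ b (embZ z))"
    using CSS_support[OF assms(1,2) \<psi>] u assms(3,4)
    by (simp add: coset_phase_invariant_def omega_powi_eq_iff)
  have "Xop u (Zop v (Uop N b \<psi>)) z =
      omega N powi dotZ b (embZ (z + u)) * (s * \<psi> (z + u))"
    by (simp add: Xop_def Zop_def Uop_def s_def)
  also have "\<dots> = omega N powi dotZ b (embZ z) * \<psi> z"
    using \<psi>_shift phase by force
  finally show "Xop u (Zop v (Uop N b \<psi>)) z = Uop N b \<psi> z"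
    by (simp add: Uop_def)
qed

lemma coset_indicator_mem_CSS:
  assumes "vec.subspace C1" and "vec.subspace C2" and "C2 \<subseteq> C1" and "y \<in> C1"
  shows "(\<lambda>z. if z - y \<in> C2 then 1 else 0) \<in> CSS C1 C2"
  unfolding CSS_def
proof (intro CollectI ballI ext)
  fix u v z assume u: "u \<in> C2" and v: "v \<in> dual_code C1"
  have "(z + u - y) - u = z - y" and "(z - y) + u = z + u - y"
    by simp_all
  then have same_coset: "z + u - y \<in> C2 \<longleftrightarrow> z - y \<in> C2"
    using u assms(2) by (metis vec.subspace_add vec.subspace_diff)
  have "dotF2 v (z + u) = 0" if "z - y \<in> C2"
  proof -
    have "z + u = (z - y) + u + y" by simp
    also have "\<dots> \<in> C1" using that u assms by (meson subsetD vec.subspace_add)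
    finally show ?thesis using v by (simp add: dual_code_def)
  qed
  then show "Xop u (Zop v (\<lambda>z. if z - y \<in> C2 then 1 else 0)) z =
      (if z - y \<in> C2 then 1 else 0)"
    using same_coset by (simp add: Xop_def Zop_def)
qed

lemma H_N_iff:
  assumes "vec.subspace C1" and "vec.subspace C2" and "C2 \<subseteq> C1" and "N > 0"
  shows "b \<in> H_N N C1 C2 \<longleftrightarrow> b \<in> ZN_vecs N \<and> coset_phase_invariant N C1 C2 b"
proof
  assume b: "b \<in> H_N N C1 C2"
  have "dotZ b (embZ (y + c)) mod int N = dotZ b (embZ y) mod int N"
    if "y \<in> C1" and "c \<in> C2" for y c
  proof -
    let ?\<psi> = "\<lambda>z. if z - y \<in> C2 then 1 else 0 :: complex"
    have "Uop N b ?\<psi> \<in> CSS C1 C2"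
      using b coset_indicator_mem_CSS[OF assms(1-3) \<open>y \<in> C1\<close>] by (auto simp: H_N_def)
    moreover have "0 \<in> dual_code C1"
      by (simp add: dual_code_def dotF2_def)
    ultimately have "Xop c (Zop 0 (Uop N b ?\<psi>)) y = Uop N b ?\<psi> y"
      using \<open>c \<in> C2\<close> by (simp add: CSS_def)
    then have "omega N powi dotZ b (embZ (y + c)) = omega N powi dotZ b (embZ y)"
      using \<open>c \<in> C2\<close> assms(2)
      by (simp add: Xop_def Zop_def Uop_def dotF2_def vec.subspace_0)
    then show ?thesis
      using omega_powi_eq_iff[OF assms(4)] by blast
  qed
  then show "b \<in> ZN_vecs N \<and> coset_phase_invariant N C1 C2 b"
    using b by (simp add: H_N_def coset_phase_invariant_def)
next
  assume b: "b \<in> ZN_vecs N \<and> coset_phase_invariant N C1 C2 b"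
  have "Uop N b ` CSS C1 C2 = CSS C1 C2"
  proof
    show "Uop N b ` CSS C1 C2 \<subseteq> CSS C1 C2"
      using Uop_mem_CSS assms b by blast
    show "CSS C1 C2 \<subseteq> Uop N b ` CSS C1 C2"
      using Uop_mem_CSS[OF assms(1,2,4) coset_phase_invariant_uminus] Uop_uminus_cancel b
      by (metis image_eqI subsetI)
  qed
  then show "b \<in> H_N N C1 C2"
    using b by (simp add: H_N_def)
qed

section \<open>Binary expansion of the phase difference\<close>

definition overlap :: "int ^ 'n \<Rightarrow> bit ^ 'n \<Rightarrow> (bit ^ 'n) set \<Rightarrow> int" where
  "overlap b g T = (\<Sum>j\<in>UNIV. b $ j * of_bit (g $ j) * (\<Prod>t\<in>T. of_bit (t $ j)))"

lemma sign_of_bit_sum: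
  "(1 - 2 * of_bit (\<Sum>s\<in>S. f s) :: 'a :: comm_ring_1) = (\<Prod>s\<in>S. 1 - 2 * of_bit (f s))"
proof (induction S rule: infinite_finite_induct)
  case (insert s S)
  have "1 - 2 * of_bit (f s + c) = (1 - 2 * of_bit (f s)) * (1 - 2 * of_bit c :: 'a)" for c
    by (cases "f s"; cases c) simp_all
  with insert show ?case by simp
qed simp_all

lemma prod_one_plus_mult_expand:
  fixes c :: "'b :: comm_semiring_1"
  assumes "finite S"
  shows "(\<Prod>s\<in>S. 1 + c * x s) = (\<Sum>T\<in>Pow S. c ^ card T * (\<Prod>t\<in>T. x t))"
proof -
  have "(\<Prod>s\<in>S. 1 + c * x s) = (\<Sum>T\<in>Pow S. (\<Prod>t\<in>T. c * x t) * (\<Prod>t\<in>S - T. 1))"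
    using prod_add[OF assms, of "\<lambda>s. c * x s" "\<lambda>_. 1"] by (simp add: add.commute)
  then show ?thesis
    by (simp add: prod.distrib)
qed

lemma dotZ_embZ_add_diff:
  "dotZ b (embZ (y + g)) - dotZ b (embZ y) =
     (\<Sum>j\<in>UNIV. b $ j * of_bit (g $ j) * (1 - 2 * of_bit (y $ j)))"
proof -
  have pointwise: "b $ j * of_bit ((y + g) $ j) - b $ j * of_bit (y $ j) =
      b $ j * of_bit (g $ j) * (1 - 2 * of_bit (y $ j))" for j
    by (cases "y $ j"; cases "g $ j") simp_all
  show ?thesis
    by (simp only: dotZ_def embZ_def vec_lambda_beta pointwise flip: sum_subtractf)
qed

lemma dotZ_embZ_sum_add_diff:
  assumes "finite S"
  shows "dotZ b (embZ (\<Sum>S + g)) - dotZ b (embZ (\<Sum>S)) =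
    (\<Sum>T\<in>Pow S. (-2) ^ card T * overlap b g T)"
proof -
  have "1 - 2 * of_bit ((\<Sum>S) $ j) = (\<Prod>s\<in>S. 1 + (-2) * of_bit (s $ j) :: int)" for j
    unfolding sum_component sign_of_bit_sum by simp
  then have "dotZ b (embZ (\<Sum>S + g)) - dotZ b (embZ (\<Sum>S)) =
      (\<Sum>j\<in>UNIV. b $ j * of_bit (g $ j) * (\<Prod>s\<in>S. 1 + (-2) * of_bit (s $ j)))"
    by (simp only: dotZ_embZ_add_diff)
  also have "\<dots> = (\<Sum>j\<in>UNIV. \<Sum>T\<in>Pow S.
      (-2) ^ card T * (b $ j * of_bit (g $ j) * (\<Prod>t\<in>T. of_bit (t $ j))))"
    by (simp only: prod_one_plus_mult_expand[OF assms] sum_distrib_left mult_ac)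
  also have "\<dots> = (\<Sum>T\<in>Pow S. (-2) ^ card T * overlap b g T)"
    by (subst sum.swap) (simp add: overlap_def sum_distrib_left)
  finally show ?thesis .
qed

lemma dvd_neg_two_power_mult_iff:
  "(m :: 'b :: comm_ring_1) dvd (-2) ^ k * a \<longleftrightarrow> m dvd 2 ^ k * a"
proof -
  have "(-2) ^ k * a = (-1) ^ k * (2 ^ k * a)"
    by (subst power_minus) (rule mult.assoc)
  then show ?thesis
    by (cases "even k") simp_all
qed

lemma dvd_subset_sums_iff:
  fixes A :: "'a set \<Rightarrow> 'b :: comm_ring_1"
  shows "(\<forall>S. finite S \<and> S \<subseteq> X \<longrightarrow> m dvd (\<Sum>T\<in>Pow S. (-2) ^ card T * A T)) \<longleftrightarrow>
         (\<forall>S. finite S \<and> S \<subseteq> X \<longrightarrow> m dvd 2 ^ card S * A S)"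
proof (intro iffI allI impI)
  fix S assume "finite S \<and> S \<subseteq> X"
    and sums: "\<forall>S. finite S \<and> S \<subseteq> X \<longrightarrow> m dvd (\<Sum>T\<in>Pow S. (-2) ^ card T * A T)"
  then have "finite S" and "S \<subseteq> X" by simp_all
  then show "m dvd 2 ^ card S * A S"
  proof (induction S rule: finite_psubset_induct)
    case (psubset S)
    let ?rest = "\<Sum>T\<in>Pow S - {S}. (-2) ^ card T * A T"
    have "(\<Sum>T\<in>Pow S. (-2) ^ card T * A T) = (-2) ^ card S * A S + ?rest"
      by (rule sum.remove) (use psubset.hyps in auto)
    moreover have "m dvd (\<Sum>T\<in>Pow S. (-2) ^ card T * A T)"
      using sums psubset.hyps psubset.prems by blast
    moreover have "m dvd ?rest"
    proof (rule dvd_sum)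
      fix T assume "T \<in> Pow S - {S}"
      then have "T \<subset> S" by auto
      then have "m dvd 2 ^ card T * A T"
        using psubset.IH psubset.prems by blast
      then show "m dvd (-2) ^ card T * A T"
        by (simp only: dvd_neg_two_power_mult_iff)
    qed
    ultimately have "m dvd (-2) ^ card S * A S"
      by (simp only: dvd_add_left_iff)
    then show ?case
      by (simp only: dvd_neg_two_power_mult_iff)
  qed
next
  fix S assume S: "finite S \<and> S \<subseteq> X"
    and prods: "\<forall>S. finite S \<and> S \<subseteq> X \<longrightarrow> m dvd 2 ^ card S * A S"
  have "m dvd (-2) ^ card T * A T" if "T \<in> Pow S" for T
  proof -
    have "finite T" and "T \<subseteq> X"
      using that S finite_subset by auto
    then show ?thesis
      using prods by (simp add: dvd_neg_two_power_mult_iff)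
  qed
  then show "m dvd (\<Sum>T\<in>Pow S. (-2) ^ card T * A T)"
    by (rule dvd_sum)
qed

lemma span_bit_eq_subset_sums:
  fixes B :: "(bit ^ 'n) set"
  shows "vec.span B = Sum ` {S. finite S \<and> S \<subseteq> B}"
proof
  show "vec.span B \<subseteq> Sum ` {S. finite S \<and> S \<subseteq> B}"
  proof
    fix y assume "y \<in> vec.span B"
    then obtain t r where t: "finite t" "t \<subseteq> B" and y: "y = (\<Sum>a\<in>t. r a *s a)"
      by (auto simp: vec.span_explicit)
    have "(\<Sum>a\<in>t. r a *s a) = (\<Sum>a\<in>t. if r a = 1 then a else 0)"
      by (intro sum.cong refl) auto
    also have "\<dots> = \<Sum>{a \<in> t. r a = 1}"
      using t(1) by (simp add: sum.inter_filter)
    finally show "y \<in> Sum ` {S. finite S \<and> S \<subseteq> B}"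
      using t y by auto
  qed
  show "Sum ` {S. finite S \<and> S \<subseteq> B} \<subseteq> vec.span B"
    by (auto intro: vec.span_sum vec.span_base)
qed

lemma translation_invariant_span:
  fixes f :: "bit ^ 'n \<Rightarrow> 'a"
  assumes "vec.subspace C" and "B \<subseteq> C"
    and invariant: "\<And>y g. y \<in> C \<Longrightarrow> g \<in> B \<Longrightarrow> f (y + g) = f y"
    and "y \<in> C" and "c \<in> vec.span B"
  shows "f (y + c) = f y"
proof -
  obtain S where "finite S" and "S \<subseteq> B" and c: "c = \<Sum>S"
    using assms(5) by (auto simp: span_bit_eq_subset_sums)
  from this(1,2) \<open>y \<in> C\<close> show ?thesis
    unfolding c
  proof (induction S arbitrary: y rule: finite_induct)
    case (insert g S)
    then have "y + g \<in> C"
      using assms(1,2) vec.subspace_add by blast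
    then have "f ((y + g) + \<Sum>S) = f y"
      using insert invariant by simp
    then show ?case
      using insert.hyps by (simp add: add.assoc add.left_commute)
  qed simp
qed

lemma coset_phase_invariant_span_iff:
  assumes "\<beta>2 \<subseteq> \<beta>1"
  shows "coset_phase_invariant N (vec.span \<beta>1) (vec.span \<beta>2) b \<longleftrightarrow>
    (\<forall>g\<in>\<beta>2. \<forall>S. finite S \<and> S \<subseteq> \<beta>1 \<longrightarrow>
      int N dvd (\<Sum>T\<in>Pow S. (-2) ^ card T * overlap b g T))"
proof -
  let ?f = "\<lambda>x. dotZ b (embZ x) mod int N"
  have "coset_phase_invariant N (vec.span \<beta>1) (vec.span \<beta>2) b \<longleftrightarrow>
      (\<forall>y\<in>vec.span \<beta>1. \<forall>g\<in>\<beta>2. ?f (y + g) = ?f y)"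
  proof
    assume "coset_phase_invariant N (vec.span \<beta>1) (vec.span \<beta>2) b"
    then show "\<forall>y\<in>vec.span \<beta>1. \<forall>g\<in>\<beta>2. ?f (y + g) = ?f y"
      unfolding coset_phase_invariant_def using vec.span_base by blast
  next
    assume "\<forall>y\<in>vec.span \<beta>1. \<forall>g\<in>\<beta>2. ?f (y + g) = ?f y"
    moreover have "\<beta>2 \<subseteq> vec.span \<beta>1"
      using assms vec.span_superset by blast
    ultimately show "coset_phase_invariant N (vec.span \<beta>1) (vec.span \<beta>2) b"
      unfolding coset_phase_invariant_def
      using translation_invariant_span[OF vec.subspace_span, of \<beta>2 \<beta>1 ?f] by blast
  qed
  also have "\<dots> \<longleftrightarrow> (\<forall>g\<in>\<beta>2. \<forall>S. finite S \<and> S \<subseteq> \<beta>1 \<longrightarrow> ?f (\<Sum>S + g) = ?f (\<Sum>S))"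
    unfolding span_bit_eq_subset_sums by blast
  also have "\<dots> \<longleftrightarrow> (\<forall>g\<in>\<beta>2. \<forall>S. finite S \<and> S \<subseteq> \<beta>1 \<longrightarrow>
      int N dvd (\<Sum>T\<in>Pow S. (-2) ^ card T * overlap b g T))"
    by (simp add: mod_eq_dvd_iff dotZ_embZ_sum_add_diff)
  finally show ?thesis .
qed

section \<open>The generators of the dual\<close>

abbreviation phase_generators ::
    "nat \<Rightarrow> (bit ^ 'n) set \<Rightarrow> (bit ^ 'n) set \<Rightarrow> nat \<Rightarrow> (int ^ 'n) set" where
  "phase_generators N \<beta>1 \<beta>2 l \<equiv>
     star_set N (embZ ` \<beta>2) (\<Union>i\<in>{0..<l}. scale_set N (2 ^ i) (rprod N (embZ ` \<beta>1) i))"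

lemma inj_embZ: "inj embZ"
proof (rule injI)
  fix x y :: "bit ^ 'n" assume "embZ x = embZ y"
  then have same: "embZ x $ j = embZ y $ j" for j
    by simp
  have "x $ j = y $ j" for j
    using same[of j] by (cases "x $ j"; cases "y $ j") (simp_all add: embZ_def)
  then show "x = y"
    by (simp add: vec_eq_iff)
qed

lemma fold_starN_nth_mod:
  "fold (starN N) vs z $ j mod int N = (z $ j * (\<Prod>v\<leftarrow>vs. v $ j)) mod int N"
proof (induction vs arbitrary: z)
  case (Cons v vs)
  have "fold (starN N) (v # vs) z $ j mod int N =
      (starN N v z $ j * (\<Prod>v\<leftarrow>vs. v $ j)) mod int N"
    using Cons.IH by simp
  also have "\<dots> = (v $ j * z $ j * (\<Prod>v\<leftarrow>vs. v $ j)) mod int N"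
    by (simp add: starN_def mod_mult_left_eq)
  finally show ?case
    by (simp add: mult_ac)
qed simp

lemma dotZ_mod_cong:
  assumes "\<And>j. v $ j mod int N = w $ j mod int N"
  shows "dotZ v b mod int N = dotZ w b mod int N"
proof -
  have pointwise: "(v $ j * b $ j) mod int N = (w $ j * b $ j) mod int N" for j
    by (metis assms mod_mult_left_eq)
  have "dotZ v b mod int N = (\<Sum>j\<in>UNIV. (v $ j * b $ j) mod int N) mod int N"
    unfolding dotZ_def by (rule mod_sum_eq[symmetric])
  also have "\<dots> = (\<Sum>j\<in>UNIV. (w $ j * b $ j) mod int N) mod int N"
    by (simp only: pointwise)
  also have "\<dots> = dotZ w b mod int N"
    unfolding dotZ_def by (rule mod_sum_eq)
  finally show ?thesis .
qed

definition star_monomial :: "nat \<Rightarrow> bit ^ 'n \<Rightarrow> (bit ^ 'n) list \<Rightarrow> int ^ 'n" where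
  "star_monomial N g ws =
     starN N (embZ g)
       (\<chi> j. (2 ^ length ws * fold (starN N) (map embZ ws) (\<chi> i. 1) $ j) mod int N)"

lemma dotZ_star_monomial:
  fixes g :: "bit ^ 'n"
  assumes "distinct ws"
  shows "dotZ (star_monomial N g ws) b mod int N =
    (2 ^ length ws * overlap b g (set ws)) mod int N"
proof -
  define w :: "int ^ 'n" where
    "w = (\<chi> j. 2 ^ length ws * (of_bit (g $ j) * (\<Prod>t\<in>set ws. of_bit (t $ j))))"
  have "star_monomial N g ws $ j mod int N = w $ j mod int N" for j
  proof -
    let ?F = "fold (starN N) (map embZ ws) (\<chi> i. 1) $ j"
    have "(\<Prod>v\<leftarrow>map embZ ws. v $ j) = (\<Prod>t\<in>set ws. of_bit (t $ j) :: int)"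
      using assms by (simp add: prod.distinct_set_conv_list comp_def embZ_def)
    then have F: "?F mod int N = (\<Prod>t\<in>set ws. of_bit (t $ j)) mod int N"
      using fold_starN_nth_mod[of N "map embZ ws" "\<chi> i. 1" j] by simp
    have "star_monomial N g ws $ j mod int N =
        (of_bit (g $ j) * (2 ^ length ws * ?F)) mod int N"
      by (simp only: star_monomial_def starN_def embZ_def vec_lambda_beta
          mod_mod_trivial mod_mult_right_eq)
    also have "\<dots> = (of_bit (g $ j) * (2 ^ length ws * (\<Prod>t\<in>set ws. of_bit (t $ j)))) mod int N"
      by (intro mod_mult_cong refl F)
    also have "\<dots> = w $ j mod int N"
      by (simp only: w_def vec_lambda_beta mult.left_commute)
    finally show ?thesis .
  qed
  then have "dotZ (star_monomial N g ws) b mod int N = dotZ w b mod int N"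
    by (rule dotZ_mod_cong)
  also have "dotZ w b = 2 ^ length ws * overlap b g (set ws)"
    unfolding dotZ_def overlap_def w_def sum_distrib_left by (simp only: vec_lambda_beta mult_ac)
  finally show ?thesis .
qed

lemma rprod_embZ_image:
  "rprod N (embZ ` B) i =
     (\<lambda>ws. fold (starN N) (map embZ ws) (\<chi> i. 1)) `
       {ws. length ws = i \<and> distinct ws \<and> set ws \<subseteq> B}"
proof -
  have "rprod N (embZ ` B) i = (\<lambda>vs. fold (starN N) vs (\<chi> i. 1)) `
      {vs. length vs = i \<and> distinct vs \<and> set vs \<subseteq> embZ ` B}"
    unfolding rprod_def by blast
  moreover have "{vs. length vs = i \<and> distinct vs \<and> set vs \<subseteq> embZ ` B} =
      map embZ ` {ws. length ws = i \<and> distinct ws \<and> set ws \<subseteq> B}"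
  proof (intro equalityI subsetI)
    fix vs assume vs: "vs \<in> {vs. length vs = i \<and> distinct vs \<and> set vs \<subseteq> embZ ` B}"
    then have "\<forall>v\<in>set vs. \<exists>w. v = embZ w"
      by auto
    then obtain ws where ws: "vs = map embZ ws"
      using ex_map_conv[of vs embZ] by blast
    then have "set ws \<subseteq> B" and "distinct ws" and "length ws = i"
      using vs by (simp_all add: inj_image_subset_iff[OF inj_embZ] distinct_map)
    then show "vs \<in> map embZ ` {ws. length ws = i \<and> distinct ws \<and> set ws \<subseteq> B}"
      using ws by blast
  next
    fix vs assume "vs \<in> map embZ ` {ws. length ws = i \<and> distinct ws \<and> set ws \<subseteq> B}"
    then obtain ws where "vs = map embZ ws" "length ws = i" "distinct ws" "set ws \<subseteq> B"
      by blast
    then show "vs \<in> {vs. length vs = i \<and> distinct vs \<and> set vs \<subseteq> embZ ` B}"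
      by (auto simp: distinct_map inj_on_subset[OF inj_embZ])
  qed
  ultimately show ?thesis
    by (simp add: image_image)
qed

lemma mem_phase_generators_iff:
  "v \<in> phase_generators N \<beta>1 \<beta>2 l \<longleftrightarrow>
     (\<exists>g\<in>\<beta>2. \<exists>ws. distinct ws \<and> set ws \<subseteq> \<beta>1 \<and> length ws < l \<and> v = star_monomial N g ws)"
proof
  assume "v \<in> phase_generators N \<beta>1 \<beta>2 l"
  then obtain g i c where "g \<in> \<beta>2" and "i < l" and v: "v = starN N (embZ g) c"
      and "c \<in> scale_set N (2 ^ i) (rprod N (embZ ` \<beta>1) i)"
    unfolding star_set_def by auto
  then obtain ws where ws: "length ws = i" "distinct ws" "set ws \<subseteq> \<beta>1"
      and c: "c = (\<chi> j. (2 ^ i * fold (starN N) (map embZ ws) (\<chi> i. 1) $ j) mod int N)"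
    unfolding scale_set_def rprod_embZ_image by auto
  have "v = star_monomial N g ws"
    unfolding v c star_monomial_def ws(1) ..
  with \<open>g \<in> \<beta>2\<close> \<open>i < l\<close> ws
  show "\<exists>g\<in>\<beta>2. \<exists>ws. distinct ws \<and> set ws \<subseteq> \<beta>1 \<and> length ws < l \<and> v = star_monomial N g ws"
    by blast
next
  assume "\<exists>g\<in>\<beta>2. \<exists>ws. distinct ws \<and> set ws \<subseteq> \<beta>1 \<and> length ws < l \<and> v = star_monomial N g ws"
  then obtain g ws where "g \<in> \<beta>2" and ws: "distinct ws" "set ws \<subseteq> \<beta>1" "length ws < l"
      and v: "v = star_monomial N g ws"
    by blast
  let ?c = "\<chi> j. (2 ^ length ws * fold (starN N) (map embZ ws) (\<chi> i. 1) $ j) mod int N"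
  have "?c \<in> scale_set N (2 ^ length ws) (rprod N (embZ ` \<beta>1) (length ws))"
    using ws unfolding scale_set_def rprod_embZ_image by blast
  then have "?c \<in> (\<Union>i\<in>{0..<l}. scale_set N (2 ^ i) (rprod N (embZ ` \<beta>1) i))"
    using ws(3) by auto
  moreover have "embZ g \<in> embZ ` \<beta>2"
    using \<open>g \<in> \<beta>2\<close> by blast
  ultimately show "v \<in> phase_generators N \<beta>1 \<beta>2 l"
    unfolding v star_monomial_def star_set_def by blast
qed

lemma perpN_phase_generators_iff:
  assumes "N = 2 ^ l"
  shows "b \<in> perpN N (phase_generators N \<beta>1 \<beta>2 l) \<longleftrightarrow>
    b \<in> ZN_vecs N \<and> (\<forall>g\<in>\<beta>2. \<forall>S. finite S \<and> S \<subseteq> \<beta>1 \<longrightarrow> int N dvd 2 ^ card S * overlap b g S)"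
proof -
  have lists_iff_subsets:
    "(\<forall>ws. distinct ws \<and> set ws \<subseteq> \<beta>1 \<and> length ws < l \<longrightarrow>
        int N dvd 2 ^ length ws * overlap b g (set ws)) \<longleftrightarrow>
     (\<forall>S. finite S \<and> S \<subseteq> \<beta>1 \<longrightarrow> int N dvd 2 ^ card S * overlap b g S)" for g
  proof (intro iffI allI impI)
    fix S assume S: "finite S \<and> S \<subseteq> \<beta>1"
      and lists: "\<forall>ws. distinct ws \<and> set ws \<subseteq> \<beta>1 \<and> length ws < l \<longrightarrow>
        int N dvd 2 ^ length ws * overlap b g (set ws)"
    show "int N dvd 2 ^ card S * overlap b g S"
    proof (cases "card S < l")
      case True
      obtain ws where "set ws = S" and "distinct ws"
        using S finite_distinct_list by blast
      then show ?thesis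
        using lists S True by (auto simp: distinct_card)
    next
      case False
      then have "(2::int) ^ l dvd 2 ^ card S"
        by (simp add: le_imp_power_dvd)
      then show ?thesis
        using assms by simp
    qed
  next
    fix ws assume subsets: "\<forall>S. finite S \<and> S \<subseteq> \<beta>1 \<longrightarrow> int N dvd 2 ^ card S * overlap b g S"
      and ws: "distinct ws \<and> set ws \<subseteq> \<beta>1 \<and> length ws < l"
    then have "int N dvd 2 ^ card (set ws) * overlap b g (set ws)"
      by simp
    then show "int N dvd 2 ^ length ws * overlap b g (set ws)"
      using ws by (simp add: distinct_card)
  qed
  have "dotZ (star_monomial N g ws) b mod int N = 0 \<longleftrightarrow>
      int N dvd 2 ^ length ws * overlap b g (set ws)" if "distinct ws" for g ws
    using dotZ_star_monomial[OF that] by (simp add: mod_eq_0_iff_dvd)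
  then show ?thesis
    unfolding perpN_def Ball_def mem_phase_generators_iff
    by (simp flip: lists_iff_subsets) blast
qed

theorem theorem3p2:
  fixes C1 C2 \<beta>1 \<beta>2 :: "(bit ^ 'n) set" and l N :: nat
  assumes "vec.subspace C1" and "vec.subspace C2" and "C2 \<subseteq> C1"
    and "vec.independent \<beta>1" and "vec.span \<beta>1 = C1"
    and "vec.independent \<beta>2" and "vec.span \<beta>2 = C2"
    and "\<beta>2 \<subseteq> \<beta>1"
    and "l > 0" and "N = 2 ^ l"
  shows "H_N N C1 C2 =
           perpN N (star_set N (embZ ` \<beta>2)
             (\<Union>i\<in>{0..<l}. scale_set N (2 ^ i) (rprod N (embZ ` \<beta>1) i)))"
proof (rule set_eqI)
  fix b
  have "N > 0"
    using assms(10) by simp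
  have "b \<in> H_N N C1 C2 \<longleftrightarrow> b \<in> ZN_vecs N \<and> coset_phase_invariant N C1 C2 b"
    using H_N_iff[OF assms(1-3) \<open>N > 0\<close>] .
  also have "\<dots> \<longleftrightarrow> b \<in> ZN_vecs N \<and> (\<forall>g\<in>\<beta>2. \<forall>S. finite S \<and> S \<subseteq> \<beta>1 \<longrightarrow>
      int N dvd (\<Sum>T\<in>Pow S. (-2) ^ card T * overlap b g T))"
    using coset_phase_invariant_span_iff[OF assms(8)] assms(5,7) by simp
  also have "\<dots> \<longleftrightarrow> b \<in> ZN_vecs N \<and> (\<forall>g\<in>\<beta>2. \<forall>S. finite S \<and> S \<subseteq> \<beta>1 \<longrightarrow>
      int N dvd 2 ^ card S * overlap b g S)"
    by (simp only: dvd_subset_sums_iff)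
  also have "\<dots> \<longleftrightarrow> b \<in> perpN N (phase_generators N \<beta>1 \<beta>2 l)"
    by (rule perpN_phase_generators_iff[OF assms(10), symmetric])
  finally show "b \<in> H_N N C1 C2 \<longleftrightarrow> b \<in> perpN N (phase_generators N \<beta>1 \<beta>2 l)" .
qed

end
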